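(* For every $p\in(0,1/3)$ there is a $p$-locally dense graphon $W$ such that: (1) $\iint_{\Omega\times\Omega}W(x,y)\,dx\,dy=\frac{9p}{8}$; (2) for every graphon $W'$ which is not $0$ a.e., $W-W'$ is not $p$-locally dense; (3) $W\otimes W$ is not $p^2$-locally dense; (4) for every $\ell\ge5$, $W^{\circ\ell}$ is not $p^\ell$-locally dense.
   Context: Let $(\Omega,\mu)$ be an atomless standard probability space. A graphon is a symmetric measurable $W:\Omega\times\Omega\to[0,1]$. A symmetric bounded measurable function $W$ on $\Omega\times\Omega$ is $p$-locally dense if $\iint_{U\times U}W(x,y)\,dx\,dy\ge p\,\mu(U)^2$ for every measurable $U\subseteq\Omega$. The tensor product $W\otimes W$ is the function on $(\Omega\times\Omega)^2$ given by $(W\otimes W)((x_1,x_2),(y_1,y_2))=W(x_1,y_1)W(x_2,y_2)$, with $\Omega\times\Omega$ carrying the product measure. The operator product is $(W_1\circ W_2)(x,y)=\int_\Omega W_1(x,z)W_2(z,y)\,dz$, and $W^{\circ\ell}$ denotes the $\ell$-fold operator product of $W$ with itself. *)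

theory Defs
  imports "HOL-Analysis.Analysis"
begin

definition Omega :: "real measure" where
  "Omega = restrict_space lborel {0..1}"

definition graphon :: "'a measure \<Rightarrow> ('a \<Rightarrow> 'a \<Rightarrow> real) \<Rightarrow> bool" where
  "graphon M W \<longleftrightarrow>
     (\<lambda>z. W (fst z) (snd z)) \<in> borel_measurable (M \<Otimes>\<^sub>M M) \<and>
     (\<forall>x\<in>space M. \<forall>y\<in>space M. W x y = W y x) \<and>
     (\<forall>x\<in>space M. \<forall>y\<in>space M. 0 \<le> W x y \<and> W x y \<le> 1)"

definition locally_dense :: "'a measure \<Rightarrow> real \<Rightarrow> ('a \<Rightarrow> 'a \<Rightarrow> real) \<Rightarrow> bool" where
  "locally_dense M p W \<longleftrightarrow>
     (\<forall>U\<in>sets M. (\<integral>z\<in>U \<times> U. W (fst z) (snd z) \<partial>(M \<Otimes>\<^sub>M M)) \<ge> p * (measure M U)\<^sup>2)"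

definition tensor :: "('a \<Rightarrow> 'a \<Rightarrow> real) \<Rightarrow> ('a \<Rightarrow> 'a \<Rightarrow> real) \<Rightarrow> ('a \<times> 'a \<Rightarrow> 'a \<times> 'a \<Rightarrow> real)" where
  "tensor W1 W2 = (\<lambda>a b. W1 (fst a) (fst b) * W2 (snd a) (snd b))"

definition opprod :: "'a measure \<Rightarrow> ('a \<Rightarrow> 'a \<Rightarrow> real) \<Rightarrow> ('a \<Rightarrow> 'a \<Rightarrow> real) \<Rightarrow> ('a \<Rightarrow> 'a \<Rightarrow> real)" where
  "opprod M W1 W2 = (\<lambda>x y. \<integral>z. W1 x z * W2 z y \<partial>M)"

text \<open>l-fold operator power (only meaningful for l >= 1; the case 0 is a dummy).\<close>
fun opow :: "'a measure \<Rightarrow> ('a \<Rightarrow> 'a \<Rightarrow> real) \<Rightarrow> nat \<Rightarrow> ('a \<Rightarrow> 'a \<Rightarrow> real)" where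
  "opow M W 0 = (\<lambda>x y. 0)"
| "opow M W (Suc 0) = W"
| "opow M W (Suc (Suc n)) = opprod M (opow M W (Suc n)) W"

end

theory Submission
  imports Defs
begin

(* W is 3p times a blow-up of the graph G on {0, ..., 5} in which 0, ..., 4 form a pentagon
   (i ~ i + 2 mod 5), 5 is isolated and every vertex carries a loop; the blocks have measures
   1/20, 1/20, 1/20, 3/10, 3/10, 1/4. As G has independence number 3, the Motzkin-Straus
   inequality (sum m_i)^2 <= 3 sum_{i ~ j} m_i m_j for the block masses m of a set U says that W is
   p-locally dense. Equality holds for masses 2 : 1 : 1 : 2 on a pentagon vertex c, its two
   non-neighbours c - 1, c + 1 and the vertex 5. Such tight sets can be placed around any two grid
   cells of width 1/40, so subtracting a graphon with positive mass on some pair of cells destroys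
   local density on a tight set. The strong square of G has an independent set of size
   10 > 3^2 (the pentagon's set {(i, 2i)} plus five pairs involving 5), and on the corresponding
   product sets W (x) W has too little mass. On the isolated block, W^l is the constant
   3 (3/4)^(l-1) p^l, which is smaller than p^l once l >= 5. *)

interpretation Omega: finite_measure Omega
  by (rule finite_measureI) (simp add: Omega_def emeasure_restrict_space space_restrict_space)

interpretation Omega2: finite_measure "Omega \<Otimes>\<^sub>M Omega"
  by (intro finite_measure_pair_measure Omega.finite_measure_axioms)

lemma space_Omega [simp]: "space Omega = {0..1}"
  by (simp add: Omega_def space_restrict_space)

lemma sets_Omega: "A \<in> sets Omega \<longleftrightarrow> A \<in> sets borel \<and> A \<subseteq> {0..1}"
  unfolding Omega_def by (auto simp: sets_restrict_space_iff)

lemma measure_Omega_eq_lborel: "A \<in> sets borel \<Longrightarrow> A \<subseteq> {0..1} \<Longrightarrow> measure Omega A = measure lborel A"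
  unfolding Omega_def by (subst measure_restrict_space) auto

lemma measure_Omega_Un_Int_atMost_le:
  assumes "S \<in> sets Omega" "A \<in> sets Omega" "s \<le> t"
  shows "measure Omega (S \<union> (A \<inter> {..t})) \<le> measure Omega (S \<union> (A \<inter> {..s})) + (t - s)"
proof -
  define D where "D = {s<..t} \<inter> {0..1}"
  have sets: "S \<union> (A \<inter> {..r}) \<in> sets Omega" for r
    using assms(1,2) by (auto simp: sets_Omega)
  have D: "D \<in> sets Omega" by (auto simp: D_def sets_Omega)
  have "S \<union> (A \<inter> {..t}) \<subseteq> (S \<union> (A \<inter> {..s})) \<union> D"
    using assms(2) by (auto simp: D_def sets_Omega)
  then have "measure Omega (S \<union> (A \<inter> {..t})) \<le> measure Omega ((S \<union> (A \<inter> {..s})) \<union> D)"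
    using sets D by (intro Omega.finite_measure_mono) auto
  also have "\<dots> \<le> measure Omega (S \<union> (A \<inter> {..s})) + measure Omega D"
    using sets D by (intro measure_Un_le) auto
  also have "measure Omega D = measure lborel D"
    by (rule measure_Omega_eq_lborel) (auto simp: D_def)
  also have "\<dots> \<le> measure lborel {s<..t}"
    using assms(3) by (intro measure_mono_fmeasurable) (auto simp: D_def fmeasurable_def)
  finally show ?thesis using assms(3) by simp
qed

lemma Omega_set_of_measure_between:
  assumes "A \<in> sets Omega" "R \<in> sets Omega" "R \<subseteq> A"
    and "measure Omega R \<le> v" "v \<le> measure Omega A"
  obtains V where "V \<in> sets Omega" "R \<subseteq> V" "V \<subseteq> A" "measure Omega V = v"
proof -
  define \<phi> where "\<phi> t = measure Omega (R \<union> (A \<inter> {..t}))" for t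
  have sets: "R \<union> (A \<inter> {..t}) \<in> sets Omega" for t
    using assms(1,2) by (auto simp: sets_Omega)
  have "1-lipschitz_on {-1..1} \<phi>"
  proof (rule lipschitz_onI)
    have increment: "\<bar>\<phi> t - \<phi> s\<bar> \<le> t - s" if "s \<le> t" for s t
      using that sets measure_Omega_Un_Int_atMost_le[OF assms(2,1) that]
        Omega.finite_measure_mono[of "R \<union> (A \<inter> {..s})" "R \<union> (A \<inter> {..t})"]
      unfolding \<phi>_def by fastforce
    show "dist (\<phi> s) (\<phi> t) \<le> 1 * dist s t" for s t
    proof (cases "s \<le> t")
      case True
      then show ?thesis using increment[of s t] by (simp add: dist_real_def abs_minus_commute)
    next
      case False
      then show ?thesis using increment[of t s] by (simp add: dist_real_def)
    qed
  qed simp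
  then have "continuous_on {-1..1} \<phi>"
    by (rule lipschitz_on_continuous_on)
  moreover have "\<phi> (-1) = measure Omega R" "\<phi> 1 = measure Omega A"
    using assms(1,3) by (auto simp: \<phi>_def sets_Omega Int_absorb2 Un_absorb1 intro!: arg_cong[of _ _ "measure Omega"])
  ultimately obtain t where "\<phi> t = v"
    using IVT'[of \<phi> "-1" v 1] assms(4,5) by auto
  then show ?thesis
    using that[of "R \<union> (A \<inter> {..t})"] sets assms(3) by (auto simp: \<phi>_def)
qed

lemma measure_pair_measure_Times:
  assumes "sigma_finite_measure N" "A \<in> sets M" "B \<in> sets N"
  shows "measure (M \<Otimes>\<^sub>M N) (A \<times> B) = measure M A * measure N B"
proof -
  interpret N: sigma_finite_measure N by fact
  show ?thesis
    using N.emeasure_pair_measure_Times[OF assms(2,3)] by (simp add: measure_def enn2real_mult)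
qed

lemma set_integral_Times_const:
  fixes f :: "'a \<times> 'b \<Rightarrow> real"
  assumes "finite_measure M" "finite_measure N" "A \<in> sets M" "B \<in> sets N"
    and "\<And>x y. x \<in> A \<Longrightarrow> y \<in> B \<Longrightarrow> f (x, y) = c"
  shows "set_integrable (M \<Otimes>\<^sub>M N) (A \<times> B) f"
    and "(\<integral>z\<in>A \<times> B. f z \<partial>(M \<Otimes>\<^sub>M N)) = c * measure M A * measure N B"
proof -
  interpret MN: finite_measure "M \<Otimes>\<^sub>M N"
    using finite_measure_pair_measure[OF assms(2,1)] .
  interpret N: finite_measure N by fact
  have AB: "A \<times> B \<in> sets (M \<Otimes>\<^sub>M N)" using assms(3,4) by simp
  have eq: "indicator (A \<times> B) z *\<^sub>R f z = c * indicator (A \<times> B) z" for z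
    using assms(5) by (cases z) (simp split: split_indicator)
  show "set_integrable (M \<Otimes>\<^sub>M N) (A \<times> B) f"
    unfolding set_integrable_def eq using AB MN.emeasure_finite
    by (simp add: less_top[symmetric])
  show "(\<integral>z\<in>A \<times> B. f z \<partial>(M \<Otimes>\<^sub>M N)) = c * measure M A * measure N B"
    unfolding set_lebesgue_integral_def eq using AB
    by (simp add: measure_pair_measure_Times[OF N.sigma_finite_measure_axioms assms(3,4)])
qed

lemma set_integral_Times_Union:
  fixes f :: "'a \<times> 'b \<Rightarrow> real"
  assumes "finite I" "finite J" "disjoint_family_on A I" "disjoint_family_on B J"
    and "\<And>i. i \<in> I \<Longrightarrow> A i \<in> sets M" "\<And>j. j \<in> J \<Longrightarrow> B j \<in> sets N"
    and "\<And>i j. i \<in> I \<Longrightarrow> j \<in> J \<Longrightarrow> set_integrable (M \<Otimes>\<^sub>M N) (A i \<times> B j) f"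
  shows "(\<integral>z\<in>(\<Union>i\<in>I. A i) \<times> (\<Union>j\<in>J. B j). f z \<partial>(M \<Otimes>\<^sub>M N))
    = (\<Sum>i\<in>I. \<Sum>j\<in>J. \<integral>z\<in>A i \<times> B j. f z \<partial>(M \<Otimes>\<^sub>M N))"
proof -
  have "(\<Union>i\<in>I. A i) \<times> (\<Union>j\<in>J. B j) = (\<Union>ij\<in>I \<times> J. A (fst ij) \<times> B (snd ij))"
    by auto
  moreover have "disjoint_family_on (\<lambda>ij. A (fst ij) \<times> B (snd ij)) (I \<times> J)"
    using assms(3,4) unfolding disjoint_family_on_def by fastforce
  then have "(\<integral>z\<in>(\<Union>ij\<in>I \<times> J. A (fst ij) \<times> B (snd ij)). f z \<partial>(M \<Otimes>\<^sub>M N))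
      = (\<Sum>ij\<in>I \<times> J. \<integral>z\<in>A (fst ij) \<times> B (snd ij). f z \<partial>(M \<Otimes>\<^sub>M N))"
    using assms by (intro set_integral_finite_Union) auto
  ultimately show ?thesis
    by (simp add: sum.cartesian_product case_prod_beta)
qed

lemma set_integral_step_kernel:
  fixes K :: "'a \<Rightarrow> 'a \<Rightarrow> real"
  assumes "finite_measure M" "finite I" "disjoint_family_on A I" "\<And>i. i \<in> I \<Longrightarrow> A i \<in> sets M"
    and "\<And>i j x y. i \<in> I \<Longrightarrow> j \<in> I \<Longrightarrow> x \<in> A i \<Longrightarrow> y \<in> A j \<Longrightarrow> K x y = \<kappa> i j"
  shows "(\<integral>z\<in>(\<Union>i\<in>I. A i) \<times> (\<Union>i\<in>I. A i). K (fst z) (snd z) \<partial>(M \<Otimes>\<^sub>M M))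
    = (\<Sum>i\<in>I. \<Sum>j\<in>I. \<kappa> i j * measure M (A i) * measure M (A j))"
proof -
  note const_on_rectangles = set_integral_Times_const[OF assms(1,1) assms(4,4), of _ _ "\<lambda>z. K (fst z) (snd z)"]
  show ?thesis
    using assms(2-5) const_on_rectangles by (simp add: set_integral_Times_Union)
qed

lemma set_integral_mono_set_nonneg:
  fixes f :: "'a \<Rightarrow> real"
  assumes "integrable M f" "\<And>x. x \<in> space M \<Longrightarrow> 0 \<le> f x" "A \<in> sets M" "B \<in> sets M" "A \<subseteq> B"
  shows "(\<integral>x\<in>A. f x \<partial>M) \<le> (\<integral>x\<in>B. f x \<partial>M)"
  unfolding set_lebesgue_integral_def
  using assms by (intro integral_mono integrable_mult_indicator) (auto split: split_indicator)

lemma graphon_nonneg: "graphon M W \<Longrightarrow> z \<in> space (M \<Otimes>\<^sub>M M) \<Longrightarrow> 0 \<le> W (fst z) (snd z)"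
  by (auto simp: graphon_def space_pair_measure)

lemma graphon_integrable:
  assumes "graphon M W" "finite_measure M"
  shows "integrable (M \<Otimes>\<^sub>M M) (\<lambda>z. W (fst z) (snd z))"
proof -
  interpret MM: finite_measure "M \<Otimes>\<^sub>M M"
    using assms(2) by (intro finite_measure_pair_measure)
  show ?thesis
    using assms(1) by (intro MM.integrable_const_bound[where B = 1] AE_I2)
      (auto simp: graphon_def space_pair_measure)
qed

section \<open>A Motzkin-Straus inequality for the looped pentagon\<close>

lemma pentagon_square_sum_le:
  fixes a b c d e :: real
  assumes "0 \<le> a" "0 \<le> b" "0 \<le> c" "0 \<le> d" "0 \<le> e"
  shows "(a + b + c + d + e)\<^sup>2 \<le> 2 * (a\<^sup>2 + b\<^sup>2 + c\<^sup>2 + d\<^sup>2 + e\<^sup>2 + 2 * (a*c + b*d + c*e + d*a + e*b))"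
proof (cases "d \<le> e")
  case True
  have "2 * (a\<^sup>2 + b\<^sup>2 + c\<^sup>2 + d\<^sup>2 + e\<^sup>2 + 2 * (a*c + b*d + c*e + d*a + e*b)) - (a + b + c + d + e)\<^sup>2
      = (a - b + c + d - e)\<^sup>2 + 4*b*d + 4*c*(e - d)"
    by (simp add: power2_eq_square algebra_simps)
  moreover have "0 \<le> 4*b*d + 4*c*(e - d)" using assms True by simp
  ultimately show ?thesis by (smt (verit) zero_le_power2)
next
  case False
  have "2 * (a\<^sup>2 + b\<^sup>2 + c\<^sup>2 + d\<^sup>2 + e\<^sup>2 + 2 * (a*c + b*d + c*e + d*a + e*b)) - (a + b + c + d + e)\<^sup>2
      = (a - b + c - d + e)\<^sup>2 + 4*b*e + 4*a*(d - e)"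
    by (simp add: power2_eq_square algebra_simps)
  moreover have "0 \<le> 4*b*e + 4*a*(d - e)" using assms False by simp
  ultimately show ?thesis by (smt (verit) zero_le_power2)
qed

definition link :: "nat \<Rightarrow> nat \<Rightarrow> real" where
  "link i j = (if i = 5 \<and> j = 5 \<or> i < 5 \<and> j < 5 \<and> (i = j \<or> (i + 2) mod 5 = j \<or> (j + 2) mod 5 = i)
     then 1 else 0)"

definition link_form :: "(nat \<Rightarrow> real) \<Rightarrow> real" where
  "link_form m = (\<Sum>i<6. \<Sum>j<6. link i j * m i * m j)"

lemma link_sym: "link i j = link j i"
  by (auto simp: link_def)

lemma link_01: "link i j = 0 \<or> link i j = 1"
  by (simp add: link_def)

lemma link_form_expand:
  "link_form m = (m 0)\<^sup>2 + (m 1)\<^sup>2 + (m 2)\<^sup>2 + (m 3)\<^sup>2 + (m 4)\<^sup>2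
     + 2 * (m 0 * m 2 + m 1 * m 3 + m 2 * m 4 + m 3 * m 0 + m 4 * m 1) + (m 5)\<^sup>2"
  by (simp add: link_form_def link_def lessThan_nat_numeral power2_eq_square algebra_simps)

lemma sum_lessThan_6:
  fixes m :: "nat \<Rightarrow> 'a :: comm_monoid_add"
  shows "(\<Sum>i<6. m i) = m 0 + m 1 + m 2 + m 3 + m 4 + m 5"
  by (simp add: eval_nat_numeral)

lemma square_sum_le_link_form:
  assumes "\<And>i. 0 \<le> m i"
  shows "(\<Sum>i<6. m i)\<^sup>2 \<le> 3 * link_form m"
proof -
  define S where "S = m 0 + m 1 + m 2 + m 3 + m 4"
  define A where "A = (m 0)\<^sup>2 + (m 1)\<^sup>2 + (m 2)\<^sup>2 + (m 3)\<^sup>2 + (m 4)\<^sup>2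
     + 2 * (m 0 * m 2 + m 1 * m 3 + m 2 * m 4 + m 3 * m 0 + m 4 * m 1)"
  have "S\<^sup>2 \<le> 2 * A"
    unfolding S_def A_def by (rule pentagon_square_sum_le) (simp_all add: assms)
  moreover have "2 * (S + m 5)\<^sup>2 + (S - 2 * m 5)\<^sup>2 = 3 * S\<^sup>2 + 6 * (m 5)\<^sup>2"
    by (simp add: power2_eq_square algebra_simps)
  moreover have "0 \<le> (S - 2 * m 5)\<^sup>2" by simp
  ultimately show ?thesis
    unfolding sum_lessThan_6 link_form_expand by (fold S_def A_def) (simp only: distrib_left; linarith)
qed

section \<open>The block graphon\<close>

definition block_of :: "real \<Rightarrow> nat" where
  "block_of x = (if x < 1/20 then 0 else if x < 1/10 then 1 else if x < 3/20 then 2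
     else if x < 9/20 then 3 else if x < 3/4 then 4 else 5)"

definition block :: "nat \<Rightarrow> real set" where
  "block i = {x \<in> {0..1}. block_of x = i}"

definition Wex :: "real \<Rightarrow> real \<Rightarrow> real \<Rightarrow> real" where
  "Wex p x y = 3 * p * link (block_of x) (block_of y)"

lemma block_of_measurable: "block_of \<in> Omega \<rightarrow>\<^sub>M count_space UNIV"
  unfolding Omega_def by (intro measurable_restrict_space1) (unfold block_of_def; measurable)

lemma block_of_pair_measurable:
  "(\<lambda>z. (block_of (fst z), block_of (snd z))) \<in> Omega \<Otimes>\<^sub>M Omega \<rightarrow>\<^sub>M count_space UNIV"
proof -
  have "(\<lambda>z. (block_of (fst z), block_of (snd z)))
      \<in> Omega \<Otimes>\<^sub>M Omega \<rightarrow>\<^sub>M count_space UNIV \<Otimes>\<^sub>M count_space UNIV"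
    using block_of_measurable by measurable
  then show ?thesis by (simp add: pair_measure_countable)
qed

lemma block_eq:
  "block 0 = {0..<1/20}" "block 1 = {1/20..<1/10}" "block 2 = {1/10..<3/20}"
  "block 3 = {3/20..<9/20}" "block 4 = {9/20..<3/4}" "block 5 = {3/4..1}"
  by (auto simp: block_def block_of_def split: if_splits)

lemma block_subset: "block i \<subseteq> {0..1}"
  by (auto simp: block_def)

lemma block_sets: "block i \<in> sets Omega"
proof -
  have "block i = block_of -` {i} \<inter> space Omega"
    by (auto simp: block_def)
  then show ?thesis
    using measurable_sets[OF block_of_measurable, of "{i}"] by simp
qed

lemma disjoint_family_block: "disjoint_family_on block I"
  by (auto simp: disjoint_family_on_def block_def)

lemma Union_block: "(\<Union>i<6. block i) = {0..1}"
proof -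
  have "block_of x < 6" for x by (simp add: block_of_def)
  then show ?thesis by (auto simp: block_def)
qed

lemma measure_block:
  "measure Omega (block 0) = 1/20" "measure Omega (block 1) = 1/20" "measure Omega (block 2) = 1/20"
  "measure Omega (block 3) = 3/10" "measure Omega (block 4) = 3/10" "measure Omega (block 5) = 1/4"
  unfolding block_eq by (subst measure_Omega_eq_lborel; auto)+

lemma measure_block_ge:
  assumes "i < 6"
  shows "1/20 \<le> measure Omega (block i)"
proof -
  have "i \<in> {0, 1, 2, 3, 4, 5}" using assms by auto
  then show ?thesis using measure_block(2)[unfolded One_nat_def] by (auto simp: measure_block)
qed

lemma exists_subsets_block_measure:
  assumes "0 \<le> v" "v \<le> 1/20"
  obtains V where "\<And>i. i < 6 \<Longrightarrow> V i \<in> sets Omega" "\<And>i. i < 6 \<Longrightarrow> V i \<subseteq> block i"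
    "\<And>i. i < 6 \<Longrightarrow> measure Omega (V i) = v"
proof -
  have "\<exists>V. i < 6 \<longrightarrow> V \<in> sets Omega \<and> V \<subseteq> block i \<and> measure Omega V = v" for i
  proof (cases "i < 6")
    case True
    have v_le: "v \<le> measure Omega (block i)"
      using assms(2) measure_block_ge[OF True] by linarith
    obtain V where "V \<in> sets Omega" "V \<subseteq> block i" "measure Omega V = v"
      by (rule Omega_set_of_measure_between[OF block_sets[of i], where R = "{}" and v = v]) (use assms(1) v_le in auto)
    then show ?thesis by blast
  qed simp
  then show thesis
    using that by metis
qed

lemma Wex_block: "x \<in> block i \<Longrightarrow> y \<in> block j \<Longrightarrow> Wex p x y = 3 * p * link i j"
  by (simp add: Wex_def block_def)

lemma graphon_Wex:
  assumes "0 \<le> p" "p \<le> 1/3"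
  shows "graphon Omega (Wex p)"
  unfolding graphon_def
proof (intro conjI ballI)
  show "(\<lambda>z. Wex p (fst z) (snd z)) \<in> borel_measurable (Omega \<Otimes>\<^sub>M Omega)"
    unfolding Wex_def
    using measurable_compose_countable'[OF _ block_of_pair_measurable,
        of "\<lambda>ij _. 3 * p * link (fst ij) (snd ij)"]
    by simp
  fix x y
  show "Wex p x y = Wex p y x" by (simp add: Wex_def link_sym)
  show "0 \<le> Wex p x y" "Wex p x y \<le> 1"
    using assms link_01[of "block_of x" "block_of y"] by (auto simp: Wex_def)
qed

lemma disjoint_family_on_subset_block:
  "(\<And>i. i \<in> I \<Longrightarrow> V i \<subseteq> block i) \<Longrightarrow> disjoint_family_on V I"
  using disjoint_family_block unfolding disjoint_family_on_def by blast

lemma measure_Union_subset_block: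
  assumes "\<And>i. i < 6 \<Longrightarrow> V i \<in> sets Omega" "\<And>i. i < 6 \<Longrightarrow> V i \<subseteq> block i"
  shows "measure Omega (\<Union>i<6. V i) = (\<Sum>i<6. measure Omega (V i))"
  using assms disjoint_family_on_subset_block[of "{..<6}" V]
  by (intro measure_finite_Union) auto

lemma set_integral_Wex:
  assumes "\<And>i. i < 6 \<Longrightarrow> V i \<in> sets Omega" "\<And>i. i < 6 \<Longrightarrow> V i \<subseteq> block i"
  shows "(\<integral>z\<in>(\<Union>i<6. V i) \<times> (\<Union>i<6. V i). Wex p (fst z) (snd z) \<partial>(Omega \<Otimes>\<^sub>M Omega))
    = 3 * p * link_form (\<lambda>i. measure Omega (V i))"
proof -
  have "Wex p x y = 3 * p * link i j" if "i < 6" "j < 6" "x \<in> V i" "y \<in> V j" for i j x y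
    using that assms(2) by (blast intro: Wex_block)
  then have "(\<integral>z\<in>(\<Union>i<6. V i) \<times> (\<Union>i<6. V i). Wex p (fst z) (snd z) \<partial>(Omega \<Otimes>\<^sub>M Omega))
      = (\<Sum>i<6. \<Sum>j<6. 3 * p * link i j * measure Omega (V i) * measure Omega (V j))"
    using assms disjoint_family_on_subset_block[of "{..<6}" V]
    by (intro set_integral_step_kernel Omega.finite_measure_axioms) auto
  then show ?thesis
    by (simp add: link_form_def sum_distrib_left mult_ac)
qed

lemma locally_dense_Wex:
  assumes "0 \<le> p"
  shows "locally_dense Omega p (Wex p)"
  unfolding locally_dense_def
proof
  fix U assume U: "U \<in> sets Omega"
  define V where "V i = U \<inter> block i" for i
  have V: "V i \<in> sets Omega" "V i \<subseteq> block i" for i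
    using U block_sets by (auto simp: V_def)
  have U_eq: "U = (\<Union>i<6. V i)"
    using U Union_block by (auto simp: V_def sets_Omega)
  have "(measure Omega U)\<^sup>2 \<le> 3 * link_form (\<lambda>i. measure Omega (V i))"
    unfolding U_eq measure_Union_subset_block[OF V] by (rule square_sum_le_link_form) simp
  from mult_left_mono[OF this assms]
  have "p * (measure Omega U)\<^sup>2 \<le> 3 * p * link_form (\<lambda>i. measure Omega (V i))"
    by (simp add: mult_ac)
  also have "\<dots> = (\<integral>z\<in>U \<times> U. Wex p (fst z) (snd z) \<partial>(Omega \<Otimes>\<^sub>M Omega))"
    unfolding U_eq by (rule set_integral_Wex[symmetric]) (simp_all add: V)
  finally show "p * (measure Omega U)\<^sup>2 \<le> (\<integral>z\<in>U \<times> U. Wex p (fst z) (snd z) \<partial>(Omega \<Otimes>\<^sub>M Omega))" .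
qed

lemma integral_Wex: "(\<integral>z. Wex p (fst z) (snd z) \<partial>(Omega \<Otimes>\<^sub>M Omega)) = 9 * p / 8"
proof -
  have "(\<integral>z. Wex p (fst z) (snd z) \<partial>(Omega \<Otimes>\<^sub>M Omega))
      = (\<integral>z\<in>(\<Union>i<6. block i) \<times> (\<Union>i<6. block i). Wex p (fst z) (snd z) \<partial>(Omega \<Otimes>\<^sub>M Omega))"
    unfolding Union_block set_lebesgue_integral_def
    by (intro Bochner_Integration.integral_cong) (auto simp: space_pair_measure)
  also have "\<dots> = 3 * p * link_form (\<lambda>i. measure Omega (block i))"
    by (rule set_integral_Wex) (simp_all add: block_sets)
  also have "link_form (\<lambda>i. measure Omega (block i)) = 3/8"
    by (simp add: link_form_expand measure_block measure_block(2)[unfolded One_nat_def] power2_eq_square)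
  finally show ?thesis by simp
qed

section \<open>Operator powers\<close>

lemma link_5: "link i 5 = (if i = 5 then 1 else 0)"
  by (simp add: link_def)

lemma opow_Wex_block_5:
  assumes "x \<in> block 5" "y \<in> block 5"
  shows "opow Omega (Wex p) (Suc n) x y = 3 * p * (3 * p / 4) ^ n"
  using assms(2)
proof (induction n arbitrary: y)
  case 0
  then show ?case using assms(1) by (simp add: Wex_block link_5)
next
  case (Suc n)
  define c where "c = 3 * p * (3 * p / 4) ^ n * (3 * p)"
  have "opow Omega (Wex p) (Suc n) x z * Wex p z y = c * indicator (block 5) z"
    if "z \<in> space Omega" for z
  proof (cases "z \<in> block 5")
    case True
    then show ?thesis using Suc by (simp add: c_def Wex_block link_5)
  next
    case False
    then have "z \<in> block (block_of z)" "block_of z \<noteq> 5"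
      using that by (auto simp: block_def)
    then show ?thesis using False Suc.prems by (simp add: Wex_block link_5)
  qed
  then have "opow Omega (Wex p) (Suc (Suc n)) x y = (\<integral>z. c * indicator (block 5) z \<partial>Omega)"
    unfolding opow.simps opprod_def by (intro Bochner_Integration.integral_cong) auto
  also have "\<dots> = c * measure Omega (block 5)"
    using block_sets[of 5] block_subset[of 5] by (simp add: Int_absorb2)
  also have "\<dots> = 3 * p * (3 * p / 4) ^ Suc n"
    by (simp add: c_def measure_block)
  finally show ?case .
qed

lemma opow_Wex_not_locally_dense:
  assumes "0 < p" "5 \<le> l"
  shows "\<not> locally_dense Omega (p ^ l) (opow Omega (Wex p) l)"
proof
  obtain n where n: "l = Suc n" "4 \<le> n" using assms(2) by (cases l) auto
  have "(\<integral>z\<in>block 5 \<times> block 5. opow Omega (Wex p) l (fst z) (snd z) \<partial>(Omega \<Otimes>\<^sub>M Omega))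
      = 3 * p * (3 * p / 4) ^ n * measure Omega (block 5) * measure Omega (block 5)"
    by (rule set_integral_Times_const(2)[OF Omega.finite_measure_axioms Omega.finite_measure_axioms
        block_sets block_sets]) (simp add: n(1) opow_Wex_block_5)
  also have "\<dots> = 3 * (3/4) ^ n * p ^ l * (measure Omega (block 5))\<^sup>2"
    by (simp add: n(1) power_mult_distrib power_divide power2_eq_square)
  also have "\<dots> < p ^ l * (measure Omega (block 5))\<^sup>2"
  proof -
    have "(3/4::real) ^ n \<le> (3/4) ^ 4"
      using n(2) by (intro power_decreasing) auto
    also have "(3/4::real) ^ 4 < 1/3"
      by (simp add: power_divide)
    finally show ?thesis
      using assms(1) by (simp add: measure_block)
  qed
  finally have "(\<integral>z\<in>block 5 \<times> block 5. opow Omega (Wex p) l (fst z) (snd z) \<partial>(Omega \<Otimes>\<^sub>M Omega))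
      < p ^ l * (measure Omega (block 5))\<^sup>2" .
  moreover assume "locally_dense Omega (p ^ l) (opow Omega (Wex p) l)"
  ultimately show False
    using block_sets[of 5] unfolding locally_dense_def by fastforce
qed

section \<open>The tensor square\<close>

definition indep_pairs :: "(nat \<times> nat) set" where
  "indep_pairs = {(0,0), (1,2), (2,4), (3,1), (4,3), (3,5), (4,5), (5,3), (5,4), (5,5)}"

lemma indep_pairs_lt: "a \<in> indep_pairs \<Longrightarrow> fst a < 6 \<and> snd a < 6"
  by (auto simp: indep_pairs_def)

lemma finite_indep_pairs: "finite indep_pairs"
  by (simp add: indep_pairs_def)

lemma card_indep_pairs: "card indep_pairs = 10"
  by (simp add: indep_pairs_def)

lemma link_indep_pairs:
  "a \<in> indep_pairs \<Longrightarrow> b \<in> indep_pairs \<Longrightarrow>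
    link (fst a) (fst b) * link (snd a) (snd b) = (if a = b then 1 else 0)"
  unfolding indep_pairs_def by (elim insertE emptyE; simp add: link_def)

lemma tensor_Wex_indep_pairs:
  assumes "a \<in> indep_pairs" "b \<in> indep_pairs"
    and "x \<in> block (fst a) \<times> block (snd a)" "y \<in> block (fst b) \<times> block (snd b)"
  shows "tensor (Wex p) (Wex p) x y = (if a = b then 9 * p\<^sup>2 else 0)"
proof -
  have "fst x \<in> block (fst a)" "snd x \<in> block (snd a)" "fst y \<in> block (fst b)" "snd y \<in> block (snd b)"
    using assms(3,4) by (simp_all add: mem_Times_iff)
  then have "tensor (Wex p) (Wex p) x y = 9 * p\<^sup>2 * (link (fst a) (fst b) * link (snd a) (snd b))"
    by (simp add: tensor_def Wex_block power2_eq_square mult_ac)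
  then show ?thesis
    using link_indep_pairs[OF assms(1,2)] by simp
qed

lemma disjoint_family_on_indep_pairs:
  assumes "\<And>i. i < 6 \<Longrightarrow> V i \<subseteq> block i"
  shows "disjoint_family_on (\<lambda>a. V (fst a) \<times> V (snd a)) indep_pairs"
  unfolding disjoint_family_on_def
proof (intro ballI impI)
  fix a b assume ab: "a \<in> indep_pairs" "b \<in> indep_pairs" "a \<noteq> b"
  have "V i \<inter> V j = {}" if "i < 6" "j < 6" "i \<noteq> j" for i j
    using assms disjoint_family_on_subset_block[of "{..<6}" V] that
    unfolding disjoint_family_on_def by blast
  moreover have "fst a \<noteq> fst b \<or> snd a \<noteq> snd b"
    using ab(3) by (auto simp: prod_eq_iff)
  ultimately show "V (fst a) \<times> V (snd a) \<inter> V (fst b) \<times> V (snd b) = {}"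
    using indep_pairs_lt[OF ab(1)] indep_pairs_lt[OF ab(2)] by (auto simp: Times_Int_Times)
qed

lemma tensor_Wex_not_locally_dense:
  assumes "0 < p"
  shows "\<not> locally_dense (Omega \<Otimes>\<^sub>M Omega) (p\<^sup>2) (tensor (Wex p) (Wex p))"
proof
  let ?M = "Omega \<Otimes>\<^sub>M Omega"
  obtain V where V_sets: "\<And>i. i < 6 \<Longrightarrow> V i \<in> sets Omega"
    and V_block: "\<And>i. i < 6 \<Longrightarrow> V i \<subseteq> block i"
    and V_measure: "\<And>i. i < 6 \<Longrightarrow> measure Omega (V i) = 1/40"
    by (rule exists_subsets_block_measure[of "1/40"]) auto
  define Q where "Q a = V (fst a) \<times> V (snd a)" for a
  define U where "U = (\<Union>a\<in>indep_pairs. Q a)"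
  have Q: "Q a \<in> sets ?M" "measure ?M (Q a) = 1/1600" "Q a \<subseteq> block (fst a) \<times> block (snd a)"
    if "a \<in> indep_pairs" for a
    using indep_pairs_lt[OF that] V_block[of "fst a"] V_block[of "snd a"]
    by (auto simp: Q_def V_sets V_measure measure_pair_measure_Times[OF Omega.sigma_finite_measure_axioms])
  have disj: "disjoint_family_on Q indep_pairs"
    unfolding Q_def using V_block by (rule disjoint_family_on_indep_pairs)
  have kernel: "tensor (Wex p) (Wex p) x y = (if a = b then 9 * p\<^sup>2 else 0)"
    if "a \<in> indep_pairs" "b \<in> indep_pairs" "x \<in> Q a" "y \<in> Q b" for a b x y
    using tensor_Wex_indep_pairs[OF that(1,2)] Q(3)[OF that(1)] Q(3)[OF that(2)] that(3,4) by blast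
  have "(\<integral>z\<in>U \<times> U. tensor (Wex p) (Wex p) (fst z) (snd z) \<partial>(?M \<Otimes>\<^sub>M ?M))
      = (\<Sum>a\<in>indep_pairs. \<Sum>b\<in>indep_pairs. (if a = b then 9 * p\<^sup>2 else 0) * measure ?M (Q a) * measure ?M (Q b))"
    unfolding U_def
    by (rule set_integral_step_kernel[OF Omega2.finite_measure_axioms finite_indep_pairs disj Q(1) kernel])
  also have "\<dots> = (\<Sum>a\<in>indep_pairs. \<Sum>b\<in>indep_pairs. if a = b then 9 * p\<^sup>2 / 1600\<^sup>2 else 0)"
    by (intro sum.cong refl) (simp add: Q power2_eq_square)
  also have "\<dots> = 90 * p\<^sup>2 / 1600\<^sup>2"
    by (simp add: finite_indep_pairs card_indep_pairs)
  also have "\<dots> < p\<^sup>2 * (measure ?M U)\<^sup>2"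
  proof -
    have "measure ?M U = (\<Sum>a\<in>indep_pairs. measure ?M (Q a))"
      unfolding U_def using Q disj by (intro measure_finite_Union) (auto simp: finite_indep_pairs)
    also have "\<dots> = 1/160"
      by (simp add: Q card_indep_pairs)
    finally have measure_U: "measure ?M U = 1/160" .
    show ?thesis
      using assms by (simp add: measure_U power2_eq_square)
  qed
  finally have "(\<integral>z\<in>U \<times> U. tensor (Wex p) (Wex p) (fst z) (snd z) \<partial>(?M \<Otimes>\<^sub>M ?M)) < p\<^sup>2 * (measure ?M U)\<^sup>2" .
  moreover have "U \<in> sets ?M"
    unfolding U_def using Q by (auto simp: finite_indep_pairs)
  moreover assume "locally_dense ?M (p\<^sup>2) (tensor (Wex p) (Wex p))"
  ultimately show False
    unfolding locally_dense_def by fastforce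
qed

section \<open>Minimality\<close>

definition cell :: "nat \<Rightarrow> real set" where
  "cell k = {real k / 40 ..< (real k + 1) / 40}"

lemma Union_block_Int_cell:
  "(\<Union>ik\<in>{..<6} \<times> {..40}. block (fst ik) \<inter> cell (snd ik)) = {0..1}"
proof
  show "(\<Union>ik\<in>{..<6} \<times> {..40}. block (fst ik) \<inter> cell (snd ik)) \<subseteq> {0..1}"
    using block_subset by blast
  show "{0..1} \<subseteq> (\<Union>ik\<in>{..<6} \<times> {..40}. block (fst ik) \<inter> cell (snd ik))"
  proof
    fix x :: real assume x: "x \<in> {0..1}"
    define k where "k = nat \<lfloor>40 * x\<rfloor>"
    have k: "real k = of_int \<lfloor>40 * x\<rfloor>"
      using x by (simp add: k_def)
    have "real k \<le> 40 * x" "40 * x < real k + 1"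
      using k of_int_floor_le[of "40 * x"] real_of_int_floor_add_one_gt[of "40 * x"] by linarith+
    then have "x \<in> cell k"
      by (auto simp: cell_def field_simps)
    moreover have "k \<le> 40"
      using x by (simp add: k_def nat_le_iff floor_le_iff)
    moreover have "x \<in> block (block_of x)" "block_of x < 6"
      using x by (auto simp: block_def block_of_def)
    ultimately show "x \<in> (\<Union>ik\<in>{..<6} \<times> {..40}. block (fst ik) \<inter> cell (snd ik))"
      by (intro UN_I[of "(block_of x, k)"]) auto
  qed
qed

lemma block_Int_cell_sets: "block i \<inter> cell k \<in> sets Omega"
  using block_sets[of i] block_subset[of i] by (auto simp: sets_Omega cell_def)

lemma measure_block_Int_cell: "measure Omega (block i \<inter> cell k) \<le> 1/40"
proof -
  have "measure Omega (block i \<inter> cell k) = measure lborel (block i \<inter> cell k)"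
    using block_Int_cell_sets[of i k] block_subset[of i] by (intro measure_Omega_eq_lborel) (auto simp: sets_Omega)
  also have "\<dots> \<le> measure lborel (cell k)"
    using block_Int_cell_sets[of i k] by (intro measure_mono_fmeasurable) (auto simp: sets_Omega cell_def fmeasurable_def)
  also have "\<dots> = 1/40"
    by (simp add: cell_def field_simps)
  finally show ?thesis .
qed

lemma graphon_pos_on_small_rectangle:
  assumes "graphon Omega W" "\<not> (AE z in Omega \<Otimes>\<^sub>M Omega. W (fst z) (snd z) = 0)"
  obtains X Y P Q where "X < 6" "Y < 6" "P \<in> sets Omega" "Q \<in> sets Omega" "P \<subseteq> block X" "Q \<subseteq> block Y"
    "measure Omega P \<le> 1/40" "measure Omega Q \<le> 1/40"
    "0 < (\<integral>z\<in>P \<times> Q. W (fst z) (snd z) \<partial>(Omega \<Otimes>\<^sub>M Omega))"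
proof -
  let ?f = "\<lambda>z. W (fst z) (snd z)"
  define I where "I = {..<6::nat} \<times> {..40::nat}"
  define C where "C ik = block (fst ik) \<inter> cell (snd ik)" for ik
  have C_sets: "C ik \<in> sets Omega" for ik
    by (simp add: C_def block_Int_cell_sets)
  have disj: "disjoint_family_on C I"
    using disjoint_family_block[of UNIV] unfolding disjoint_family_on_def C_def cell_def
    by (fastforce simp: prod_eq_iff)
  have int: "integrable (Omega \<Otimes>\<^sub>M Omega) ?f"
    using assms(1) Omega.finite_measure_axioms by (rule graphon_integrable)
  have "0 \<le> (\<integral>z. ?f z \<partial>(Omega \<Otimes>\<^sub>M Omega))"
    using graphon_nonneg[OF assms(1)] by (intro integral_nonneg_AE) auto
  moreover have "(\<integral>z. ?f z \<partial>(Omega \<Otimes>\<^sub>M Omega)) \<noteq> 0"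
    using integral_nonneg_eq_0_iff_AE[OF int] graphon_nonneg[OF assms(1)] assms(2) by auto
  moreover have "(\<integral>z. ?f z \<partial>(Omega \<Otimes>\<^sub>M Omega)) = (\<integral>z\<in>(\<Union>ik\<in>I. C ik) \<times> (\<Union>ik\<in>I. C ik). ?f z \<partial>(Omega \<Otimes>\<^sub>M Omega))"
    unfolding I_def C_def Union_block_Int_cell set_lebesgue_integral_def
    by (intro Bochner_Integration.integral_cong) (auto simp: space_pair_measure)
  moreover have "\<dots> = (\<Sum>a\<in>I. \<Sum>b\<in>I. \<integral>z\<in>C a \<times> C b. ?f z \<partial>(Omega \<Otimes>\<^sub>M Omega))"
  proof (intro set_integral_Times_Union)
    show "set_integrable (Omega \<Otimes>\<^sub>M Omega) (C a \<times> C b) ?f" for a b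
      unfolding set_integrable_def using C_sets int by (intro integrable_mult_indicator) auto
  qed (use disj C_sets in \<open>auto simp: I_def\<close>)
  ultimately have "0 < (\<Sum>a\<in>I. \<Sum>b\<in>I. \<integral>z\<in>C a \<times> C b. ?f z \<partial>(Omega \<Otimes>\<^sub>M Omega))"
    by linarith
  then obtain a b where "a \<in> I" "b \<in> I" "0 < (\<integral>z\<in>C a \<times> C b. ?f z \<partial>(Omega \<Otimes>\<^sub>M Omega))"
    by (meson not_le sum_nonpos)
  then show thesis
    using that[of "fst a" "fst b" "C a" "C b"] C_sets measure_block_Int_cell by (auto simp: I_def C_def)
qed

definition tight_weight :: "nat \<Rightarrow> nat \<Rightarrow> real" where
  "tight_weight c i = (if i = 5 \<or> i = c then 1/20 else if i = (c + 1) mod 5 \<or> i = (c + 4) mod 5 then 1/40 else 0)"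

(* Each of X, Y below 5 lies in {c - 1, c, c + 1}, and equals c if X = Y. *)
definition tight_center :: "nat \<Rightarrow> nat \<Rightarrow> nat" where
  "tight_center X Y = (if X = 5 then (if Y = 5 then 0 else Y) else if Y = 5 then X
     else if Y = (X + 2) mod 5 then (X + 1) mod 5 else if X = (Y + 2) mod 5 then (Y + 1) mod 5 else X)"

lemma link_form_cong: "(\<And>i. i < 6 \<Longrightarrow> m i = m' i) \<Longrightarrow> link_form m = link_form m'"
  by (simp add: link_form_def)

lemma link_form_tight_weight:
  assumes "c < 5"
  shows "3 * link_form (tight_weight c) = (\<Sum>i<6. tight_weight c i)\<^sup>2"
proof -
  have "c \<in> {0, 1, 2, 3, 4}" using assms by auto
  then show ?thesis
    unfolding link_form_expand sum_lessThan_6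
    by (elim insertE emptyE; simp add: tight_weight_def power2_eq_square)
qed

lemma tight_center_lt: "X < 6 \<Longrightarrow> Y < 6 \<Longrightarrow> tight_center X Y < 5"
  by (simp add: tight_center_def)

lemma tight_weight_tight_center:
  assumes "X < 6" "Y < 6" "i < 6"
  shows "(if X = i then 1/40 else 0) + (if Y = i then 1/40 else 0) \<le> tight_weight (tight_center X Y) i"
proof -
  have "X \<in> {0, 1, 2, 3, 4, 5}" "Y \<in> {0, 1, 2, 3, 4, 5}" "i \<in> {0, 1, 2, 3, 4, 5}"
    using assms by auto
  then show ?thesis
    by (elim insertE emptyE; simp add: tight_center_def tight_weight_def)
qed

lemma measure_Int_block_le_tight_weight:
  assumes "X < 6" "Y < 6" "i < 6" "P \<in> sets Omega" "Q \<in> sets Omega" "P \<subseteq> block X" "Q \<subseteq> block Y"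
    and "measure Omega P \<le> 1/40" "measure Omega Q \<le> 1/40"
  shows "measure Omega ((P \<union> Q) \<inter> block i) \<le> tight_weight (tight_center X Y) i"
proof -
  define P' where "P' = (if X = i then P else {})"
  define Q' where "Q' = (if Y = i then Q else {})"
  have "(P \<union> Q) \<inter> block i \<subseteq> P' \<union> Q'"
    using assms(6,7) disjoint_family_block[of UNIV]
    unfolding P'_def Q'_def disjoint_family_on_def by (cases "X = i"; cases "Y = i"; simp; blast)
  then have "measure Omega ((P \<union> Q) \<inter> block i) \<le> measure Omega (P' \<union> Q')"
    using assms(4,5) block_sets by (intro Omega.finite_measure_mono) (auto simp: P'_def Q'_def)
  also have "\<dots> \<le> measure Omega P' + measure Omega Q'"
    using assms(4,5) by (intro measure_Un_le) (auto simp: P'_def Q'_def)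
  also have "\<dots> \<le> (if X = i then 1/40 else 0) + (if Y = i then 1/40 else 0)"
    using assms(8,9) by (simp add: P'_def Q'_def)
  also have "\<dots> \<le> tight_weight (tight_center X Y) i"
    using assms(1-3) by (rule tight_weight_tight_center)
  finally show ?thesis .
qed

lemma set_integral_Wex_tight:
  assumes "c < 5" "\<And>i. i < 6 \<Longrightarrow> V i \<in> sets Omega" "\<And>i. i < 6 \<Longrightarrow> V i \<subseteq> block i"
    and "\<And>i. i < 6 \<Longrightarrow> measure Omega (V i) = tight_weight c i"
  shows "(\<integral>z\<in>(\<Union>i<6. V i) \<times> (\<Union>i<6. V i). Wex p (fst z) (snd z) \<partial>(Omega \<Otimes>\<^sub>M Omega))
    = p * (measure Omega (\<Union>i<6. V i))\<^sup>2"
proof -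
  have "(\<integral>z\<in>(\<Union>i<6. V i) \<times> (\<Union>i<6. V i). Wex p (fst z) (snd z) \<partial>(Omega \<Otimes>\<^sub>M Omega))
      = 3 * p * link_form (\<lambda>i. measure Omega (V i))"
    using assms(2,3) by (rule set_integral_Wex)
  also have "link_form (\<lambda>i. measure Omega (V i)) = link_form (tight_weight c)"
    using assms(4) by (rule link_form_cong)
  also have "3 * p * \<dots> = p * (\<Sum>i<6. tight_weight c i)\<^sup>2"
    using link_form_tight_weight[OF assms(1)] by simp
  also have "(\<Sum>i<6. tight_weight c i) = measure Omega (\<Union>i<6. V i)"
    using measure_Union_subset_block[OF assms(2,3)] by (simp add: assms(4))
  finally show ?thesis .
qed

lemma exists_tight_set:
  assumes "X < 6" "Y < 6" "P \<in> sets Omega" "Q \<in> sets Omega" "P \<subseteq> block X" "Q \<subseteq> block Y"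
    and "measure Omega P \<le> 1/40" "measure Omega Q \<le> 1/40"
  obtains U where "U \<in> sets Omega" "P \<union> Q \<subseteq> U"
    "(\<integral>z\<in>U \<times> U. Wex p (fst z) (snd z) \<partial>(Omega \<Otimes>\<^sub>M Omega)) = p * (measure Omega U)\<^sup>2"
proof -
  define c where "c = tight_center X Y"
  define R where "R i = (P \<union> Q) \<inter> block i" for i
  have "\<exists>V. i < 6 \<longrightarrow> V \<in> sets Omega \<and> R i \<subseteq> V \<and> V \<subseteq> block i \<and> measure Omega V = tight_weight c i" for i
  proof (cases "i < 6")
    case True
    have "R i \<in> sets Omega" "R i \<subseteq> block i"
      using assms(3,4) block_sets by (auto simp: R_def)
    moreover have "measure Omega (R i) \<le> tight_weight c i"
      unfolding R_def c_def using assms(1,2) True assms(3-8) by (rule measure_Int_block_le_tight_weight)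
    moreover have "tight_weight c i \<le> measure Omega (block i)"
      using measure_block_ge[OF True] by (simp add: tight_weight_def)
    ultimately obtain V where "V \<in> sets Omega" "R i \<subseteq> V" "V \<subseteq> block i" "measure Omega V = tight_weight c i"
      by (metis Omega_set_of_measure_between block_sets)
    then show ?thesis by blast
  qed simp
  then obtain V where V_sets: "\<And>i. i < 6 \<Longrightarrow> V i \<in> sets Omega"
    and R_V: "\<And>i. i < 6 \<Longrightarrow> R i \<subseteq> V i"
    and V_block: "\<And>i. i < 6 \<Longrightarrow> V i \<subseteq> block i"
    and V_measure: "\<And>i. i < 6 \<Longrightarrow> measure Omega (V i) = tight_weight c i"
    by metis
  have "P \<union> Q \<subseteq> R X \<union> R Y"
    using assms(5,6) by (auto simp: R_def)
  also have "\<dots> \<subseteq> (\<Union>i<6. V i)"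
    using R_V assms(1,2) by auto
  finally show thesis
    using that[of "\<Union>i<6. V i"] V_sets set_integral_Wex_tight[OF _ V_sets V_block V_measure]
      tight_center_lt[OF assms(1,2)] by (auto simp: c_def)
qed

lemma Wex_minus_graphon_not_locally_dense:
  assumes "0 \<le> p" "p \<le> 1/3" "graphon Omega W" "\<not> (AE z in Omega \<Otimes>\<^sub>M Omega. W (fst z) (snd z) = 0)"
  shows "\<not> locally_dense Omega p (\<lambda>x y. Wex p x y - W x y)"
proof
  let ?M = "Omega \<Otimes>\<^sub>M Omega"
  obtain X Y P Q where XY: "X < 6" "Y < 6" "P \<in> sets Omega" "Q \<in> sets Omega" "P \<subseteq> block X" "Q \<subseteq> block Y"
    "measure Omega P \<le> 1/40" "measure Omega Q \<le> 1/40"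
    and pos: "0 < (\<integral>z\<in>P \<times> Q. W (fst z) (snd z) \<partial>?M)"
    using graphon_pos_on_small_rectangle[OF assms(3,4)] by blast
  obtain U where U: "U \<in> sets Omega" "P \<union> Q \<subseteq> U"
    and tight: "(\<integral>z\<in>U \<times> U. Wex p (fst z) (snd z) \<partial>?M) = p * (measure Omega U)\<^sup>2"
    using exists_tight_set[OF XY] by blast
  have int_W: "integrable ?M (\<lambda>z. W (fst z) (snd z))"
    using assms(3) Omega.finite_measure_axioms by (rule graphon_integrable)
  have int_Wex: "integrable ?M (\<lambda>z. Wex p (fst z) (snd z))"
    using graphon_Wex[OF assms(1,2)] Omega.finite_measure_axioms by (rule graphon_integrable)
  have "(\<integral>z\<in>P \<times> Q. W (fst z) (snd z) \<partial>?M) \<le> (\<integral>z\<in>U \<times> U. W (fst z) (snd z) \<partial>?M)"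
    using int_W graphon_nonneg[OF assms(3)] XY(3,4) U by (intro set_integral_mono_set_nonneg) auto
  moreover have "set_integrable ?M (U \<times> U) (\<lambda>z. W (fst z) (snd z))"
    "set_integrable ?M (U \<times> U) (\<lambda>z. Wex p (fst z) (snd z))"
    unfolding set_integrable_def using U(1) int_W int_Wex by (intro integrable_mult_indicator; simp)+
  ultimately have "(\<integral>z\<in>U \<times> U. Wex p (fst z) (snd z) - W (fst z) (snd z) \<partial>?M) < p * (measure Omega U)\<^sup>2"
    using pos tight by simp
  moreover assume "locally_dense Omega p (\<lambda>x y. Wex p x y - W x y)"
  ultimately show False
    using U(1) unfolding locally_dense_def by fastforce
qed

theorem proposition5p1:
  fixes p :: real
  assumes "0 < p" and "p < 1/3"
  shows "\<exists>W. graphon Omega W \<and> locally_dense Omega p W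
    \<and> (\<integral>z. W (fst z) (snd z) \<partial>(Omega \<Otimes>\<^sub>M Omega)) = 9 * p / 8
    \<and> (\<forall>W'. graphon Omega W' \<and> \<not> (AE z in Omega \<Otimes>\<^sub>M Omega. W' (fst z) (snd z) = 0)
           \<longrightarrow> \<not> locally_dense Omega p (\<lambda>x y. W x y - W' x y))
    \<and> \<not> locally_dense (Omega \<Otimes>\<^sub>M Omega) (p\<^sup>2) (tensor W W)
    \<and> (\<forall>l::nat. l \<ge> 5 \<longrightarrow> \<not> locally_dense Omega (p ^ l) (opow Omega W l))"
proof (intro exI[of _ "Wex p"] conjI allI impI)
  have p: "0 \<le> p" "p \<le> 1/3"
    using assms by auto
  show "graphon Omega (Wex p)"
    using p by (rule graphon_Wex)
  show "locally_dense Omega p (Wex p)"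
    using p(1) by (rule locally_dense_Wex)
  show "(\<integral>z. Wex p (fst z) (snd z) \<partial>(Omega \<Otimes>\<^sub>M Omega)) = 9 * p / 8"
    by (rule integral_Wex)
  show "\<not> locally_dense Omega p (\<lambda>x y. Wex p x y - W' x y)"
    if "graphon Omega W' \<and> \<not> (AE z in Omega \<Otimes>\<^sub>M Omega. W' (fst z) (snd z) = 0)" for W'
    using Wex_minus_graphon_not_locally_dense[OF p] that by blast
  show "\<not> locally_dense (Omega \<Otimes>\<^sub>M Omega) (p\<^sup>2) (tensor (Wex p) (Wex p))"
    using assms(1) by (rule tensor_Wex_not_locally_dense)
  show "\<not> locally_dense Omega (p ^ l) (opow Omega (Wex p) l)" if "5 \<le> l" for l
    using assms(1) that by (rule opow_Wex_not_locally_dense)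
qed

end
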